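(* Let $\mathcal V$ be a finite set, $2\le k\le|\mathcal V|-2$, let $\Gamma\subset\binom{\mathcal V}{k}$ be a code and $G\le{\rm Aut}(\Gamma)\cap{\rm Sym}(\mathcal V)$. If $\Gamma$ is $G$-strongly incidence-transitive, then $\Gamma$ is $G$-incidence-transitive and $\delta(\Gamma)\ge2$.
   Context: The Johnson graph $J(|\mathcal V|,k)$ has vertex set $\binom{\mathcal V}{k}$, the $k$-subsets of $\mathcal V$, two being adjacent iff they meet in $k-1$ points; $d$ is graph distance. A code is a proper non-empty subset $\Gamma\subset\binom{\mathcal V}{k}$; $\delta(\Gamma)$ is the least distance between distinct codewords; the neighbour set $\Gamma_1$ is the set of $k$-subsets not in $\Gamma$ at distance $1$ from some codeword. ${\rm Aut}(\Gamma)$ is the setwise stabiliser of $\Gamma$ in ${\rm Aut}(J(|\mathcal V|,k))$. $\Gamma$ is $G$-incidence-transitive if $G$ is transitive on $\{(\gamma,\gamma_1)\in\Gamma\times\Gamma_1: d(\gamma,\gamma_1)=1\}$. $\Gamma$ is $G$-strongly incidence-transitive if $G$ is transitive on $\Gamma$ and, for $\gamma\in\Gamma$, $G_\gamma$ is transitive on $\gamma\times(\mathcal V\setminus\gamma)$. *)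

theory Defs
  imports "HOL-Algebra.Bij" "HOL-Algebra.Group"
begin

definition ksubsets :: "'a set \<Rightarrow> nat \<Rightarrow> 'a set set" where
  "ksubsets V k = {A. A \<subseteq> V \<and> card A = k}"

definition johnson_adj :: "'a set \<Rightarrow> nat \<Rightarrow> 'a set \<Rightarrow> 'a set \<Rightarrow> bool" where
  "johnson_adj V k A B \<longleftrightarrow> A \<in> ksubsets V k \<and> B \<in> ksubsets V k \<and> A \<noteq> B
      \<and> card (A \<inter> B) = k - 1"

definition johnson_dist :: "'a set \<Rightarrow> nat \<Rightarrow> 'a set \<Rightarrow> 'a set \<Rightarrow> nat" where
  "johnson_dist V k A B = (LEAST n. \<exists>p. length p = Suc n \<and> hd p = A \<and> last p = B
      \<and> (\<forall>i<n. johnson_adj V k (p ! i) (p ! Suc i)))"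

definition is_code :: "'a set \<Rightarrow> nat \<Rightarrow> 'a set set \<Rightarrow> bool" where
  "is_code V k \<Gamma> \<longleftrightarrow> \<Gamma> \<subseteq> ksubsets V k \<and> \<Gamma> \<noteq> {} \<and> \<Gamma> \<noteq> ksubsets V k"

definition min_dist_ge :: "'a set \<Rightarrow> nat \<Rightarrow> 'a set set \<Rightarrow> nat \<Rightarrow> bool" where
  "min_dist_ge V k \<Gamma> d \<longleftrightarrow>
     (\<forall>A\<in>\<Gamma>. \<forall>B\<in>\<Gamma>. A \<noteq> B \<longrightarrow> d \<le> johnson_dist V k A B)"

definition neighbour_set :: "'a set \<Rightarrow> nat \<Rightarrow> 'a set set \<Rightarrow> 'a set set" where
  "neighbour_set V k \<Gamma> = {B \<in> ksubsets V k. B \<notin> \<Gamma> \<and> (\<exists>A\<in>\<Gamma>. johnson_dist V k A B = 1)}"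

definition incidences :: "'a set \<Rightarrow> nat \<Rightarrow> 'a set set \<Rightarrow> ('a set \<times> 'a set) set" where
  "incidences V k \<Gamma> = {(A, B). A \<in> \<Gamma> \<and> B \<in> neighbour_set V k \<Gamma> \<and> johnson_dist V k A B = 1}"

definition stabilises_code :: "('a \<Rightarrow> 'a) set \<Rightarrow> 'a set set \<Rightarrow> bool" where
  "stabilises_code G \<Gamma> \<longleftrightarrow> (\<forall>g\<in>G. (\<lambda>A. g ` A) ` \<Gamma> = \<Gamma>)"

definition incidence_transitive :: "'a set \<Rightarrow> nat \<Rightarrow> ('a \<Rightarrow> 'a) set \<Rightarrow> 'a set set \<Rightarrow> bool" where
  "incidence_transitive V k G \<Gamma> \<longleftrightarrow>
     (\<forall>(A, B)\<in>incidences V k \<Gamma>. \<forall>(A', B')\<in>incidences V k \<Gamma>.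
        \<exists>g\<in>G. g ` A = A' \<and> g ` B = B')"

definition strongly_incidence_transitive :: "'a set \<Rightarrow> ('a \<Rightarrow> 'a) set \<Rightarrow> 'a set set \<Rightarrow> bool" where
  "strongly_incidence_transitive V G \<Gamma> \<longleftrightarrow>
     (\<forall>A\<in>\<Gamma>. \<forall>B\<in>\<Gamma>. \<exists>g\<in>G. g ` A = B) \<and>
     (\<forall>C\<in>\<Gamma>. \<forall>(a, b)\<in>C \<times> (V - C). \<forall>(c, d)\<in>C \<times> (V - C).
        \<exists>g\<in>G. g ` C = C \<and> g a = c \<and> g b = d)"

end

theory Submission
  imports Defs
begin

text \<open>
  Take incidences (A, B) and (A', B'), so that B = A - {a} \<union> {b} and B' = A' - {a'} \<union> {b'}.
  Transitivity on codewords moves A to A', and the stabiliser of A' then moves the images of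
  a, b to a', b'; the composite maps (A, B) to (A', B').  If two codewords were adjacent,
  this transitivity together with the invariance of \<Gamma> would make \<Gamma> closed under adjacency,
  hence equal to all k-subsets by connectivity of the Johnson graph, contradicting properness.
\<close>

lemma finite_ksubset: "finite V \<Longrightarrow> A \<in> ksubsets V k \<Longrightarrow> finite A"
  by (auto simp: ksubsets_def intro: finite_subset)

lemma johnson_adj_exchange:
  assumes "finite V" "1 \<le> k" "johnson_adj V k A B"
  obtains a b where "a \<in> A" "a \<notin> B" "b \<in> B" "b \<notin> A" "B = insert b (A - {a})"
proof -
  have A: "A \<subseteq> V" "card A = k" and B: "B \<subseteq> V" "card B = k"
    and I: "card (A \<inter> B) = k - 1"
    using assms(3) by (auto simp: johnson_adj_def ksubsets_def)
  have "finite A" "finite B" using A B assms(1) finite_subset by auto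
  then have "card (A - B) = 1" "card (B - A) = 1"
    using card_Diff_subset_Int[of A B] card_Diff_subset_Int[of B A] A B I assms(2)
    by (simp_all add: Int_commute)
  then obtain a b where "A - B = {a}" "B - A = {b}" by (auto simp: card_Suc_eq)
  then show thesis by (intro that[of a b]) blast+
qed

lemma johnson_adj_insert_Diff:
  assumes "finite V" "1 \<le> k" "A \<in> ksubsets V k" "a \<in> A" "b \<in> V" "b \<notin> A"
  shows "johnson_adj V k A (insert b (A - {a}))"
proof -
  have "finite A" "card A = k" "A \<subseteq> V"
    using finite_ksubset assms by (auto simp: ksubsets_def)
  moreover have "A \<inter> insert b (A - {a}) = A - {a}" "A \<noteq> insert b (A - {a})"
    using assms(4,6) by blast+
  ultimately show ?thesis
    using assms by (auto simp: johnson_adj_def ksubsets_def)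
qed

lemma johnson_adj_closed_imp_ksubsets_subset:
  assumes "finite V" "1 \<le> k" "X \<in> S" "X \<in> ksubsets V k"
    and closed: "\<And>X Y. X \<in> S \<Longrightarrow> johnson_adj V k X Y \<Longrightarrow> Y \<in> S"
  shows "ksubsets V k \<subseteq> S"
proof
  fix Y assume Y: "Y \<in> ksubsets V k"
  have "finite Y" using finite_ksubset assms(1) Y by blast
  show "Y \<in> S" using assms(3,4)
  proof (induction "card (Y - X)" arbitrary: X)
    case 0
    with \<open>finite Y\<close> have "Y \<subseteq> X" by auto
    moreover have "card Y = card X" "finite X"
      using 0 Y finite_ksubset assms(1) by (auto simp: ksubsets_def)
    ultimately show ?case using 0 card_subset_eq by metis
  next
    case (Suc n)
    have "finite X" using finite_ksubset assms(1) Suc by blast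
    have "card (X - Y) = card (Y - X)"
      using card_Diff_subset_Int[of X Y] card_Diff_subset_Int[of Y X] \<open>finite X\<close> \<open>finite Y\<close>
        Suc.prems Y by (simp add: ksubsets_def Int_commute)
    then have "X - Y \<noteq> {}" "Y - X \<noteq> {}" using Suc.hyps(2) by fastforce+
    then obtain x y where x: "x \<in> X" "x \<notin> Y" and y: "y \<in> Y" "y \<notin> X" by blast
    have "y \<in> V" using y Y by (auto simp: ksubsets_def)
    define X' where "X' = insert y (X - {x})"
    have adj: "johnson_adj V k X X'"
      unfolding X'_def by (rule johnson_adj_insert_Diff[OF assms(1,2) Suc.prems(2) x(1) \<open>y \<in> V\<close> y(2)])
    have "Y - X' = (Y - X) - {y}" unfolding X'_def using x by blast
    then have "n = card (Y - X')" using Suc.hyps(2) y \<open>finite Y\<close> by simp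
    moreover have "X' \<in> S" "X' \<in> ksubsets V k"
      using closed Suc.prems adj by (auto simp: johnson_adj_def)
    ultimately show ?case using Suc.hyps(1) by blast
  qed
qed

lemma johnson_walk_exists:
  assumes "finite V" "1 \<le> k" "X \<in> ksubsets V k" "Y \<in> ksubsets V k"
  shows "\<exists>n p. length p = Suc n \<and> hd p = X \<and> last p = Y
      \<and> (\<forall>i<n. johnson_adj V k (p ! i) (p ! Suc i))"
proof -
  define S where "S = {Y. \<exists>n p. length p = Suc n \<and> hd p = X \<and> last p = Y
      \<and> (\<forall>i<n. johnson_adj V k (p ! i) (p ! Suc i))}"
  have "X \<in> S" unfolding S_def by (intro CollectI exI[of _ 0] exI[of _ "[X]"]) simp
  moreover have "Z \<in> S" if "W \<in> S" "johnson_adj V k W Z" for W Z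
  proof -
    obtain n p where p: "length p = Suc n" "hd p = X" "last p = W"
      "\<forall>i<n. johnson_adj V k (p ! i) (p ! Suc i)" using \<open>W \<in> S\<close> by (auto simp: S_def)
    have "p ! n = W" using p(1,3) by (metis diff_Suc_1 last_conv_nth list.size(3) nat.simps(3))
    then have "\<forall>i<Suc n. johnson_adj V k ((p @ [Z]) ! i) ((p @ [Z]) ! Suc i)"
      using p(1,4) \<open>johnson_adj V k W Z\<close> by (auto simp: nth_append less_Suc_eq)
    moreover have "hd (p @ [Z]) = X" using p(1,2) by (cases p) auto
    ultimately show ?thesis
      using p(1) unfolding S_def by (intro CollectI exI[of _ "Suc n"] exI[of _ "p @ [Z]"]) simp
  qed
  ultimately have "ksubsets V k \<subseteq> S"
    using johnson_adj_closed_imp_ksubsets_subset assms(1-3) by blast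
  then show ?thesis using assms(4) by (auto simp: S_def)
qed

text \<open>The LEAST in johnson_dist only denotes a walk length because connectivity supplies a walk.\<close>

lemma johnson_dist_walk:
  assumes "finite V" "1 \<le> k" "X \<in> ksubsets V k" "Y \<in> ksubsets V k"
  obtains p where "length p = Suc (johnson_dist V k X Y)" "hd p = X" "last p = Y"
    "\<forall>i<johnson_dist V k X Y. johnson_adj V k (p ! i) (p ! Suc i)"
  using LeastI_ex[OF johnson_walk_exists[OF assms]] that
  unfolding johnson_dist_def by blast

lemma johnson_dist_eq_1_imp_adj:
  assumes "finite V" "1 \<le> k" "X \<in> ksubsets V k" "Y \<in> ksubsets V k"
    and "johnson_dist V k X Y = 1"
  shows "johnson_adj V k X Y"
proof -
  obtain p where p: "length p = Suc (Suc 0)" "hd p = X" "last p = Y"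
    "johnson_adj V k (p ! 0) (p ! 1)"
    using johnson_dist_walk[OF assms(1-4)] assms(5) by (metis One_nat_def less_one)
  then obtain x y where "p = [x, y]" by (auto simp: length_Suc_conv)
  with p show ?thesis by simp
qed

lemma johnson_dist_ge_2:
  assumes "finite V" "1 \<le> k" "X \<in> ksubsets V k" "Y \<in> ksubsets V k"
    and "X \<noteq> Y" "\<not> johnson_adj V k X Y"
  shows "2 \<le> johnson_dist V k X Y"
proof (rule ccontr)
  assume "\<not> 2 \<le> johnson_dist V k X Y"
  moreover have "johnson_dist V k X Y \<noteq> 1"
    using johnson_dist_eq_1_imp_adj[OF assms(1-4)] assms(6) by blast
  ultimately have "johnson_dist V k X Y = 0" by linarith
  then obtain p where "length p = 1" "hd p = X" "last p = Y"
    using johnson_dist_walk[OF assms(1-4)] by (metis One_nat_def)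
  then show False using assms(5) by (cases p) auto
qed

lemma BijGroup_subgroup_compose_mem:
  assumes "subgroup G (BijGroup V)" "g \<in> G" "h \<in> G"
  shows "compose V g h \<in> G"
proof -
  have "g \<in> Bij V" "h \<in> Bij V" using subgroup.subset[OF assms(1)] assms(2,3)
    by (auto simp: BijGroup_def)
  then have "g \<otimes>\<^bsub>BijGroup V\<^esub> h = compose V g h" by (simp add: BijGroup_def)
  then show ?thesis using subgroup.m_closed[OF assms] by simp
qed

lemma BijGroup_subgroup_inj_on:
  "subgroup G (BijGroup V) \<Longrightarrow> g \<in> G \<Longrightarrow> inj_on g V"
  using subgroup.subset by (fastforce simp: BijGroup_def Bij_def bij_betw_def)

lemma image_compose: "X \<subseteq> V \<Longrightarrow> compose V g h ` X = g ` h ` X"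
  by (auto simp: compose_def image_def subset_iff)

lemma inj_on_image_Diff_singleton:
  assumes "inj_on g V" "A \<subseteq> V" "a \<in> A"
  shows "g ` (A - {a}) = g ` A - {g a}"
  using inj_on_image_set_diff[OF assms(1), of A "{a}"] assms(2,3) by auto

lemma strongly_incidence_transitive_codewords:
  assumes "strongly_incidence_transitive V G \<Gamma>" "A \<in> \<Gamma>" "B \<in> \<Gamma>"
  obtains g where "g \<in> G" "g ` A = B"
proof -
  have "\<forall>A\<in>\<Gamma>. \<forall>B\<in>\<Gamma>. \<exists>g\<in>G. g ` A = B"
    using assms(1) unfolding strongly_incidence_transitive_def by (rule conjunct1)
  then show thesis using assms(2,3) that by blast
qed

lemma strongly_incidence_transitive_stabiliser:
  assumes "strongly_incidence_transitive V G \<Gamma>" "C \<in> \<Gamma>"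
    "a \<in> C" "b \<in> V - C" "c \<in> C" "d \<in> V - C"
  obtains g where "g \<in> G" "g ` C = C" "g a = c" "g b = d"
proof -
  have "\<forall>(x, y)\<in>C \<times> (V - C). \<forall>(u, w)\<in>C \<times> (V - C). \<exists>g\<in>G. g ` C = C \<and> g x = u \<and> g y = w"
    using assms(1) assms(2) unfolding strongly_incidence_transitive_def by (rule bspec[OF conjunct2])
  then have "\<exists>g\<in>G. g ` C = C \<and> g a = c \<and> g b = d"
    using assms(3-6) by (drule_tac x="(a, b)" in bspec) (auto dest: bspec[where x = "(c, d)"])
  then show thesis using that by blast
qed

lemma strongly_incidence_transitive_adjacent_pairs:
  assumes "finite V" "1 \<le> k" "subgroup G (BijGroup V)"
    and sit: "strongly_incidence_transitive V G \<Gamma>"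
    and "A \<in> \<Gamma>" "A' \<in> \<Gamma>" "johnson_adj V k A B" "johnson_adj V k A' B'"
  shows "\<exists>f\<in>G. f ` A = A' \<and> f ` B = B'"
proof -
  obtain a b where ab: "a \<in> A" "b \<notin> A" "B = insert b (A - {a})"
    using johnson_adj_exchange[OF assms(1,2,7)] by metis
  obtain a' b' where ab': "a' \<in> A'" "b' \<notin> A'" "B' = insert b' (A' - {a'})"
    using johnson_adj_exchange[OF assms(1,2,8)] by metis
  have V: "A \<subseteq> V" "B \<subseteq> V" "A' \<subseteq> V" "B' \<subseteq> V"
    using assms(7,8) by (auto simp: johnson_adj_def ksubsets_def)
  obtain h where h: "h \<in> G" "h ` A = A'"
    using strongly_incidence_transitive_codewords[OF sit assms(5,6)] by blast
  have inj_h: "inj_on h V" using BijGroup_subgroup_inj_on assms(3) h(1) by blast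
  have "h ` V \<subseteq> V" using subgroup.subset[OF assms(3)] h(1)
    by (auto simp: BijGroup_def Bij_def bij_betw_def)
  moreover have "b \<in> V" using ab V by blast
  ultimately have ha: "h a \<in> A'" and hb: "h b \<in> V - A'"
    using inj_on_image_mem_iff[OF inj_h \<open>b \<in> V\<close> V(1)] ab h(2) by auto
  obtain g where g: "g \<in> G" "g ` A' = A'" "g (h a) = a'" "g (h b) = b'"
  proof (rule strongly_incidence_transitive_stabiliser[OF sit assms(6) ha hb ab'(1)])
    show "b' \<in> V - A'" using ab' V by blast
  qed
  have inj_g: "inj_on g V" using BijGroup_subgroup_inj_on assms(3) g(1) by blast
  have "compose V g h ` A = g ` h ` A" by (rule image_compose[OF V(1)])
  also have "\<dots> = A'" using h(2) g(2) by simp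
  finally have "compose V g h ` A = A'" .
  have "compose V g h ` B = g ` h ` B" by (rule image_compose[OF V(2)])
  also have "\<dots> = g ` insert (h b) (A' - {h a})"
    using inj_on_image_Diff_singleton[OF inj_h V(1) ab(1)] ab(3) h(2) by simp
  also have "\<dots> = B'"
    using inj_on_image_Diff_singleton[OF inj_g V(3) ha] g(2-4) ab'(3) by simp
  finally have "compose V g h ` B = B'" .
  with \<open>compose V g h ` A = A'\<close> show ?thesis
    using BijGroup_subgroup_compose_mem[OF assms(3) g(1) h(1)] by blast
qed

theorem lemma2p1:
  fixes V :: "'a set" and k :: nat and \<Gamma> :: "'a set set" and G :: "('a \<Rightarrow> 'a) set"
  assumes "finite V"
    and "2 \<le> k" and "k + 2 \<le> card V"
    and "is_code V k \<Gamma>"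
    and "subgroup G (BijGroup V)"
    and "stabilises_code G \<Gamma>"
    and "strongly_incidence_transitive V G \<Gamma>"
  shows "incidence_transitive V k G \<Gamma> \<and> min_dist_ge V k \<Gamma> 2"
proof
  have "1 \<le> k" using assms(2) by simp
  have code: "\<Gamma> \<subseteq> ksubsets V k" "\<Gamma> \<noteq> ksubsets V k" using assms(4) by (auto simp: is_code_def)
  note transitive = strongly_incidence_transitive_adjacent_pairs[OF assms(1) \<open>1 \<le> k\<close> assms(5,7)]
  have "johnson_adj V k A B" if "(A, B) \<in> incidences V k \<Gamma>" for A B
    using that code johnson_dist_eq_1_imp_adj[OF assms(1) \<open>1 \<le> k\<close>]
    by (auto simp: incidences_def neighbour_set_def)
  then show "incidence_transitive V k G \<Gamma>"
    using transitive by (fastforce simp: incidence_transitive_def incidences_def)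
  have "\<not> johnson_adj V k A B" if "A \<in> \<Gamma>" "B \<in> \<Gamma>" for A B
  proof
    assume "johnson_adj V k A B"
    then have "Y \<in> \<Gamma>" if "X \<in> \<Gamma>" "johnson_adj V k X Y" for X Y
      using transitive[of A X B Y] assms(6) \<open>A \<in> \<Gamma>\<close> \<open>B \<in> \<Gamma>\<close> that
      unfolding stabilises_code_def by blast
    then show False
      using johnson_adj_closed_imp_ksubsets_subset[OF assms(1) \<open>1 \<le> k\<close>] \<open>A \<in> \<Gamma>\<close> code by blast
  qed
  then show "min_dist_ge V k \<Gamma> 2"
    using johnson_dist_ge_2[OF assms(1) \<open>1 \<le> k\<close>] code
    unfolding min_dist_ge_def by (meson subsetD)
qed

end
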